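(* Let $M$ be a finite monoid and $e,f\in E(M)$, and let $X=MeM$, $Y=MfM$. Then $\mathrm{AIrr}_{\mathscr K(M)}(e,f)=fMe\setminus\nabla Y\nabla X$ and $\mathrm{Irr}_{\mathscr K(M)}(e,f)=\mathrm{Null}(\mathrm{AIrr}_{\mathscr K(M)}(e,f))$. In particular, both are $G_f\times G_e^{op}$-invariant subsets of $fMe$.
   Context: $E(M)$ is the set of idempotents. For a principal ideal $X$, $\nabla X=\{m\in M: X\not\subseteq MmM\}$, and $\nabla Y\nabla X=\{ab:a\in\nabla Y,b\in\nabla X\}$. The Karoubi envelope $\mathscr K(M)$ has objects $E(M)$, morphisms $e\to f$ the elements of $fMe$, composition the product of $M$. A morphism $m\colon e\to f$ is almost irreducible if whenever $m=gh$ in $\mathscr K(M)$, either $h$ is a split monomorphism or $g$ a split epimorphism; it is irreducible if moreover it is neither a split monomorphism nor a split epimorphism. $\mathrm{AIrr}_{\mathscr K(M)}(e,f)$, $\mathrm{Irr}_{\mathscr K(M)}(e,f)$ are the sets of such morphisms. $m$ is null if $m\notin mMm$; $\mathrm{Null}(A)$ is the set of null elements of $A$. $G_e$ is the group of units of $eMe$; $G_f\times G_e^{op}$-invariant means closed under left multiplication by $G_f$ and right multiplication by $G_e$. *)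

theory Defs
  imports Main
begin

text \<open>A finite monoid is modelled as a type of class monoid_mult and finite.\<close>

definition idems :: "'a::monoid_mult set" where
  "idems = {e. e * e = e}"

definition pideal :: "'a::monoid_mult \<Rightarrow> 'a set" where
  "pideal m = {a * m * b | a b. True}"

text \<open>fMe, the hom-set from e to f in the Karoubi envelope.\<close>
definition sandw :: "'a::monoid_mult \<Rightarrow> 'a \<Rightarrow> 'a set" where
  "sandw f e = {f * m * e | m. True}"

definition nabla :: "'a::monoid_mult set \<Rightarrow> 'a set" where
  "nabla X = {m. \<not> X \<subseteq> pideal m}"

definition setprod :: "'a::monoid_mult set \<Rightarrow> 'a set \<Rightarrow> 'a set" where
  "setprod A B = {a * b | a b. a \<in> A \<and> b \<in> B}"

text \<open>Karoubi envelope: m : e \<rightarrow> f (e, f idempotent) is split mono iff some r : f \<rightarrow> e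
  with r m = 1_e = e; split epi iff some s : f \<rightarrow> e with m s = 1_f = f.\<close>
definition split_mono :: "'a::monoid_mult \<Rightarrow> 'a \<Rightarrow> 'a \<Rightarrow> bool" where
  "split_mono e f m \<longleftrightarrow> (\<exists>r \<in> sandw e f. r * m = e)"

definition split_epi :: "'a::monoid_mult \<Rightarrow> 'a \<Rightarrow> 'a \<Rightarrow> bool" where
  "split_epi e f m \<longleftrightarrow> (\<exists>s \<in> sandw e f. m * s = f)"

definition AIrr :: "'a::monoid_mult \<Rightarrow> 'a \<Rightarrow> 'a set" where
  "AIrr e f = {m \<in> sandw f e. \<forall>k \<in> idems. \<forall>h \<in> sandw k e. \<forall>g \<in> sandw f k.
      m = g * h \<longrightarrow> split_mono e k h \<or> split_epi k f g}"

definition Irr :: "'a::monoid_mult \<Rightarrow> 'a \<Rightarrow> 'a set" where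
  "Irr e f = {m \<in> AIrr e f. \<not> split_mono e f m \<and> \<not> split_epi e f m}"

definition Null :: "'a::monoid_mult set \<Rightarrow> 'a set" where
  "Null A = {m \<in> A. m \<notin> {m * x * m | x. True}}"

definition unitgrp :: "'a::monoid_mult \<Rightarrow> 'a set" where
  "unitgrp e = {u \<in> sandw e e. \<exists>v \<in> sandw e e. u * v = e \<and> v * u = e}"

definition bi_invariant :: "'a::monoid_mult \<Rightarrow> 'a \<Rightarrow> 'a set \<Rightarrow> bool" where
  "bi_invariant e f S \<longleftrightarrow> (\<forall>m \<in> S. (\<forall>g \<in> unitgrp f. g * m \<in> S) \<and> (\<forall>g \<in> unitgrp e. m * g \<in> S))"

end

theory Submission
  imports Defs
begin

text \<open>
  A factorisation m = g h through an object k is a factorisation m = a b in M; conversely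
  every factorisation m = a b can be routed through the object 1. Hence m is almost
  irreducible iff in every factorisation m = a b, either e \<in> MbM or f \<in> MaM. Finiteness
  turns these J-relations into the one-sided ones e \<in> Mb, f \<in> aM, which are exactly
  split monomorphisms and split epimorphisms. A regular m = m x m factors through the
  idempotent x m, and almost irreducibility then makes m itself split, so the irreducible
  morphisms are the null ones. Invariance holds because the units of eMe and fMf can be
  cancelled, while \<nabla>Y\<nabla>X is a two-sided ideal.
\<close>

lemma finite_monoid_idempotent_power:
  fixes v :: "'a::{monoid_mult,finite}"
  shows "\<exists>n>0. v^n * v^n = v^n"
proof -
  have "\<not> inj (\<lambda>n::nat. v^n)"
    using finite_UNIV infinite_UNIV_nat finite_imageD by (metis finite_subset subset_UNIV)
  then obtain i j :: nat where "i < j" "v^i = v^j"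
    unfolding inj_def by (metis linorder_neqE_nat)
  define p where "p = j - i"
  have "p > 0" using \<open>i < j\<close> p_def by simp
  have shift: "v^(m + p) = v^m" if "m \<ge> i" for m
  proof -
    have "m + p = j + (m - i)" using that \<open>i < j\<close> p_def by simp
    then have "v^(m + p) = v^j * v^(m - i)" by (simp add: power_add)
    also have "\<dots> = v^i * v^(m - i)" using \<open>v^i = v^j\<close> by simp
    also have "\<dots> = v^m" using that by (simp add: power_add[symmetric])
    finally show ?thesis .
  qed
  have periodic: "v^(m + q * p) = v^m" if "m \<ge> i" for m q
  proof (induction q)
    case (Suc q)
    have "m + Suc q * p = (m + q * p) + p" by simp
    then show ?case using shift[of "m + q * p"] that Suc by (simp only:)
  qed simp
  define n where "n = (i + 1) * p"
  have "(i + 1) * 1 \<le> n" unfolding n_def using \<open>p > 0\<close> by (intro mult_le_mono2) simp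
  then have "n \<ge> i" by simp
  have "v^n * v^n = v^(n + (i + 1) * p)"
    using n_def by (simp add: power_add[symmetric])
  also have "\<dots> = v^n" using periodic[OF \<open>n \<ge> i\<close>] .
  finally show ?thesis using \<open>p > 0\<close> n_def by auto
qed

lemma two_sided_fixed_iterate:
  fixes a u w :: "'a::monoid_mult"
  assumes "a = u * a * w"
  shows "a = u^n * a * w^n"
proof (induction n)
  case (Suc n)
  have "u^Suc n * a * w^Suc n = u^n * (u * a * w) * w^n"
    by (simp only: power_Suc2[of u] power_Suc[of w] mult.assoc)
  with Suc assms show ?case by simp
qed simp

lemma two_sided_fixed_left:
  fixes a u w :: "'a::{monoid_mult,finite}"
  assumes "a = u * a * w"
  shows "\<exists>n>0. u^n * a = a"
proof -
  obtain n where "n > 0" "u^n * u^n = u^n" using finite_monoid_idempotent_power by blast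
  moreover have "u^n * a = u^n * (u^n * a * w^n)" using two_sided_fixed_iterate[OF assms] by simp
  ultimately show ?thesis using two_sided_fixed_iterate[OF assms, of n] by (metis mult.assoc)
qed

lemma two_sided_fixed_right:
  fixes a u w :: "'a::{monoid_mult,finite}"
  assumes "a = u * a * w"
  shows "\<exists>n>0. a * w^n = a"
proof -
  obtain n where "n > 0" "w^n * w^n = w^n" using finite_monoid_idempotent_power by blast
  moreover have "a * w^n = u^n * a * w^n * w^n" using two_sided_fixed_iterate[OF assms] by simp
  ultimately show ?thesis using two_sided_fixed_iterate[OF assms, of n] by (metis mult.assoc)
qed

lemma finite_stable_left:
  fixes a b u w :: "'a::{monoid_mult,finite}"
  assumes "a = u * (b * a) * w"
  shows "\<exists>t. a = t * (b * a)"
proof -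
  obtain n where "n > 0" "(u * b)^n * a = a"
    using two_sided_fixed_left[of a "u * b" w] assms by (auto simp: mult.assoc)
  then have "a = ((u * b)^(n - 1) * u) * (b * a)"
    by (metis Suc_diff_1 mult.assoc power_Suc2)
  then show ?thesis by blast
qed

lemma finite_stable_right:
  fixes a b u w :: "'a::{monoid_mult,finite}"
  assumes "a = u * (a * b) * w"
  shows "\<exists>t. a = (a * b) * t"
proof -
  obtain n where "n > 0" "a * (b * w)^n = a"
    using two_sided_fixed_right[of a u "b * w"] assms by (auto simp: mult.assoc)
  then have "a = (a * b) * (w * (b * w)^(n - 1))"
    by (metis Suc_diff_1 mult.assoc power_Suc)
  then show ?thesis by blast
qed

lemma pideal_memI: "(x::'a::monoid_mult) = u * a * w \<Longrightarrow> x \<in> pideal a"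
  unfolding pideal_def by blast

lemma pideal_self: "(a::'a::monoid_mult) \<in> pideal a"
  by (rule pideal_memI[of a 1 a 1]) simp

lemma pideal_subset_iff: "pideal b \<subseteq> pideal (a::'a::monoid_mult) \<longleftrightarrow> b \<in> pideal a"
proof
  assume "b \<in> pideal a"
  then obtain x y where "b = x * a * y" unfolding pideal_def by blast
  show "pideal b \<subseteq> pideal a"
  proof
    fix z assume "z \<in> pideal b"
    then obtain u w where "z = u * b * w" unfolding pideal_def by blast
    then have "z = (u * x) * a * (y * w)" using \<open>b = x * a * y\<close> by (simp add: mult.assoc)
    then show "z \<in> pideal a" by (rule pideal_memI)
  qed
qed (use pideal_self in blast)

lemma nabla_pideal_iff: "a \<in> nabla (pideal e) \<longleftrightarrow> (e::'a::monoid_mult) \<notin> pideal a"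
  unfolding nabla_def pideal_subset_iff by simp

lemma nabla_mult_left: "a \<in> nabla Z \<Longrightarrow> v * a \<in> nabla (Z::'a::monoid_mult set)"
proof -
  have "pideal (v * a) \<subseteq> pideal a"
    unfolding pideal_subset_iff by (rule pideal_memI[of _ v a 1]) simp
  then show "a \<in> nabla Z \<Longrightarrow> v * a \<in> nabla Z" unfolding nabla_def by blast
qed

lemma nabla_mult_right: "a \<in> nabla Z \<Longrightarrow> a * v \<in> nabla (Z::'a::monoid_mult set)"
proof -
  have "pideal (a * v) \<subseteq> pideal a"
    unfolding pideal_subset_iff by (rule pideal_memI[of _ 1 a v]) simp
  then show "a \<in> nabla Z \<Longrightarrow> a * v \<in> nabla Z" unfolding nabla_def by blast
qed

lemma setprod_nabla_mult_left:
  "x \<in> setprod (nabla Y) (nabla X) \<Longrightarrow> v * x \<in> setprod (nabla Y) (nabla (X::'a::monoid_mult set))"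
proof -
  assume "x \<in> setprod (nabla Y) (nabla X)"
  then obtain a b where "x = a * b" "a \<in> nabla Y" "b \<in> nabla X" unfolding setprod_def by blast
  then have "v * x = (v * a) * b" "v * a \<in> nabla Y" by (simp_all add: mult.assoc nabla_mult_left)
  with \<open>b \<in> nabla X\<close> show ?thesis unfolding setprod_def by blast
qed

lemma setprod_nabla_mult_right:
  "x \<in> setprod (nabla Y) (nabla X) \<Longrightarrow> x * v \<in> setprod (nabla Y) (nabla (X::'a::monoid_mult set))"
proof -
  assume "x \<in> setprod (nabla Y) (nabla X)"
  then obtain a b where "x = a * b" "a \<in> nabla Y" "b \<in> nabla X" unfolding setprod_def by blast
  then have "x * v = a * (b * v)" "b * v \<in> nabla X" by (simp_all add: mult.assoc nabla_mult_right)
  with \<open>a \<in> nabla Y\<close> show ?thesis unfolding setprod_def by blast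
qed

lemma sandw_memI: "f * x * e \<in> sandw f (e::'a::monoid_mult)"
  unfolding sandw_def by blast

lemma sandw_iff:
  fixes e f m :: "'a::monoid_mult"
  assumes "e * e = e" "f * f = f"
  shows "m \<in> sandw f e \<longleftrightarrow> f * m * e = m"
proof
  assume "m \<in> sandw f e"
  then obtain x where "m = f * x * e" unfolding sandw_def by blast
  then show "f * m * e = m" using assms by (metis mult.assoc)
qed (metis sandw_memI)

lemma sandw_absorb:
  fixes e f m :: "'a::monoid_mult"
  assumes "e * e = e" "f * f = f" "m \<in> sandw f e"
  shows "f * m = m" "m * e = m"
  using assms unfolding sandw_iff[OF assms(1,2)] by (metis mult.assoc)+

lemma sandw_mult: "g \<in> sandw f k \<Longrightarrow> h \<in> sandw k e \<Longrightarrow> g * h \<in> sandw f (e::'a::monoid_mult)"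
proof -
  assume "g \<in> sandw f k" "h \<in> sandw k e"
  then obtain x y where "g = f * x * k" "h = k * y * e" unfolding sandw_def by blast
  then have "g * h = f * (x * k * k * y) * e" by (simp add: mult.assoc)
  then show "g * h \<in> sandw f e" by (simp add: sandw_memI)
qed

lemma split_mono_imp_pideal: "split_mono e k h \<Longrightarrow> e \<in> pideal (h::'a::monoid_mult)"
  unfolding split_mono_def by (metis mult_1_right pideal_memI)

lemma split_epi_imp_pideal: "split_epi k f g \<Longrightarrow> f \<in> pideal (g::'a::monoid_mult)"
  unfolding split_epi_def by (metis mult_1_left pideal_memI)

lemma split_mono_iff_pideal:
  fixes e k h :: "'a::{monoid_mult,finite}"
  assumes "e * e = e" "k * k = k" "h \<in> sandw k e"
  shows "split_mono e k h \<longleftrightarrow> e \<in> pideal h"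
proof
  note kh = sandw_absorb(1)[OF assms] and he = sandw_absorb(2)[OF assms]
  assume "e \<in> pideal h"
  then obtain x y where xy: "x * h * y = e" unfolding pideal_def by blast
  have "e = x * (h * e) * y" by (simp only: he xy)
  then obtain t where "e = t * (h * e)" using finite_stable_left by blast
  then have "t * h = e" by (simp add: he)
  then have "(e * t * k) * h = e" by (simp add: mult.assoc kh assms(1))
  then show "split_mono e k h" unfolding split_mono_def using sandw_memI by blast
qed (rule split_mono_imp_pideal)

lemma split_epi_iff_pideal:
  fixes f k g :: "'a::{monoid_mult,finite}"
  assumes "k * k = k" "f * f = f" "g \<in> sandw f k"
  shows "split_epi k f g \<longleftrightarrow> f \<in> pideal g"
proof
  note fg = sandw_absorb(1)[OF assms] and gk = sandw_absorb(2)[OF assms]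
  assume "f \<in> pideal g"
  then obtain x y where xy: "x * g * y = f" unfolding pideal_def by blast
  have "f = x * (f * g) * y" by (simp only: fg xy)
  then obtain t where "f = (f * g) * t" using finite_stable_right by blast
  then have "g * t = f" by (simp add: fg)
  then have "g * (k * t * f) = f" by (simp add: mult.assoc[symmetric] gk assms(2))
  then show "split_epi k f g" unfolding split_epi_def using sandw_memI by blast
qed (rule split_epi_imp_pideal)

lemma one_idems: "(1::'a::monoid_mult) \<in> idems"
  unfolding idems_def by simp

lemma AIrr_subset_sandw: "AIrr e f \<subseteq> sandw f e"
  unfolding AIrr_def by blast

lemma AIrr_disjoint_nabla_product:
  fixes e f m :: "'a::monoid_mult"
  assumes e: "e * e = e" and f: "f * f = f" and m: "m \<in> AIrr e f"
  shows "m \<notin> setprod (nabla (pideal f)) (nabla (pideal e))"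
proof
  assume "m \<in> setprod (nabla (pideal f)) (nabla (pideal e))"
  then obtain a b where ab: "m = a * b" "f \<notin> pideal a" "e \<notin> pideal b"
    unfolding setprod_def nabla_pideal_iff by blast
  have "m \<in> sandw f e" using m AIrr_subset_sandw by blast
  then have "f * m * e = m" by (simp add: sandw_iff[OF e f])
  then have "m = (f * a * 1) * (1 * b * e)" using ab(1) by (simp add: mult.assoc)
  then have "split_mono e 1 (1 * b * e) \<or> split_epi 1 f (f * a * 1)"
    using m one_idems sandw_memI unfolding AIrr_def by blast
  then have "e \<in> pideal (1 * b * e) \<or> f \<in> pideal (f * a * 1)"
    using split_mono_imp_pideal split_epi_imp_pideal by blast
  moreover have "pideal (1 * b * e) \<subseteq> pideal b" "pideal (f * a * 1) \<subseteq> pideal a"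
    unfolding pideal_subset_iff by (auto intro: pideal_memI[of _ 1 b e] pideal_memI[of _ f a 1])
  ultimately show False using ab by blast
qed

lemma AIrr_if_not_nabla_product:
  fixes e f m :: "'a::{monoid_mult,finite}"
  assumes e: "e * e = e" and f: "f * f = f" and m: "m \<in> sandw f e"
    and np: "m \<notin> setprod (nabla (pideal f)) (nabla (pideal e))"
  shows "m \<in> AIrr e f"
  unfolding AIrr_def
proof (intro CollectI conjI ballI impI m)
  fix k h g assume k: "k \<in> idems" and h: "h \<in> sandw k e" and g: "g \<in> sandw f k" and "m = g * h"
  have kk: "k * k = k" using k unfolding idems_def by simp
  have "e \<in> pideal h \<or> f \<in> pideal g"
    using np \<open>m = g * h\<close> unfolding setprod_def nabla_pideal_iff by blast
  then show "split_mono e k h \<or> split_epi k f g"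
    using split_mono_iff_pideal[OF e kk h] split_epi_iff_pideal[OF kk f g] by blast
qed

theorem AIrr_eq:
  fixes e f :: "'a::{monoid_mult,finite}"
  assumes "e * e = e" "f * f = f"
  shows "AIrr e f = sandw f e - setprod (nabla (pideal f)) (nabla (pideal e))"
  using AIrr_disjoint_nabla_product[OF assms] AIrr_if_not_nabla_product[OF assms]
    AIrr_subset_sandw by blast

lemma split_imp_regular:
  fixes e f m :: "'a::monoid_mult"
  assumes e: "e * e = e" and f: "f * f = f" and m: "m \<in> sandw f e"
    and "split_mono e f m \<or> split_epi e f m"
  shows "m \<in> {m * x * m | x. True}"
  using assms(4)
proof
  assume "split_mono e f m"
  then obtain r where "r * m = e" unfolding split_mono_def by blast
  then have "m = m * r * m" by (simp add: mult.assoc sandw_absorb(2)[OF e f m])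
  then show ?thesis by blast
next
  assume "split_epi e f m"
  then obtain s where "m * s = f" unfolding split_epi_def by blast
  then have "m = m * s * m" by (simp add: sandw_absorb(1)[OF e f m])
  then show ?thesis by blast
qed

lemma AIrr_regular_imp_split:
  fixes e f m :: "'a::monoid_mult"
  assumes e: "e * e = e" and f: "f * f = f" and m: "m \<in> AIrr e f"
    and "m \<in> {m * x * m | x. True}"
  shows "split_mono e f m \<or> split_epi e f m"
proof -
  have ms: "m \<in> sandw f e" using m AIrr_subset_sandw by blast
  note fm = sandw_absorb(1)[OF e f ms] and me = sandw_absorb(2)[OF e f ms]
  obtain x where "m = m * x * m" using assms(4) by blast
  then have mx: "m * x * m = m" by simp
  define k where "k = x * m"
  have "k * k = x * (m * x * m)" by (simp add: k_def mult.assoc)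
  then have kk: "k * k = k" by (simp add: mx k_def)
  have "k * e = k" by (simp add: k_def mult.assoc me)
  then have "k * k * e = k" by (simp add: kk)
  then have k_hom: "k \<in> sandw k e" by (simp add: sandw_iff[OF e kk])
  have "f * m * k = m" by (simp add: fm k_def mult.assoc[symmetric] mx)
  then have m_hom: "m \<in> sandw f k" by (simp add: sandw_iff[OF kk f])
  have "m = m * k" using mx by (simp add: k_def mult.assoc)
  then have "split_mono e k k \<or> split_epi k f m"
    using m kk k_hom m_hom unfolding AIrr_def idems_def by blast
  then show ?thesis
  proof
    assume "split_mono e k k"
    then obtain t where t: "(e * t * k) * k = e" unfolding split_mono_def sandw_def by blast
    have "(e * (t * k * x) * f) * m = (e * t * k) * (x * m)" by (simp add: mult.assoc fm)
    also have "\<dots> = e" using t by (simp add: k_def)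
    finally show ?thesis unfolding split_mono_def using sandw_memI by blast
  next
    assume "split_epi k f m"
    then obtain t where t: "m * (k * t * f) = f" unfolding split_epi_def sandw_def by blast
    have "m * (e * (x * m * t) * f) = m * (k * t * f)"
      by (simp add: k_def mult.assoc[symmetric] me)
    then show ?thesis unfolding split_epi_def using t sandw_memI by metis
  qed
qed

theorem Irr_eq_Null_AIrr:
  fixes e f :: "'a::monoid_mult"
  assumes "e * e = e" "f * f = f"
  shows "Irr e f = Null (AIrr e f)"
  unfolding Irr_def Null_def
  using split_imp_regular[OF assms] AIrr_regular_imp_split[OF assms] AIrr_subset_sandw by blast

lemma unitgrp_cancel_left:
  fixes e f g m :: "'a::monoid_mult"
  assumes "e * e = e" "f * f = f" "g \<in> unitgrp f" "m \<in> sandw f e"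
  shows "g * m \<in> sandw f e" "\<exists>v. v * (g * m) = m"
proof -
  obtain v where g: "g \<in> sandw f f" and "v * g = f" using assms(3) unfolding unitgrp_def by blast
  show "g * m \<in> sandw f e" using sandw_mult[OF g assms(4)] .
  have "v * (g * m) = m" by (simp add: mult.assoc[symmetric] \<open>v * g = f\<close> sandw_absorb(1)[OF assms(1,2,4)])
  then show "\<exists>v. v * (g * m) = m" ..
qed

lemma unitgrp_cancel_right:
  fixes e f g m :: "'a::monoid_mult"
  assumes "e * e = e" "f * f = f" "g \<in> unitgrp e" "m \<in> sandw f e"
  shows "m * g \<in> sandw f e" "\<exists>v. (m * g) * v = m"
proof -
  obtain v where g: "g \<in> sandw e e" and "g * v = e" using assms(3) unfolding unitgrp_def by blast
  show "m * g \<in> sandw f e" using sandw_mult[OF assms(4) g] .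
  have "(m * g) * v = m" by (simp add: mult.assoc \<open>g * v = e\<close> sandw_absorb(2)[OF assms(1,2,4)])
  then show "\<exists>v. (m * g) * v = m" ..
qed

lemma bi_invariant_diff_ideal:
  fixes e f :: "'a::monoid_mult"
  assumes "e * e = e" "f * f = f"
    and "\<And>x v. x \<in> T \<Longrightarrow> v * x \<in> T" "\<And>x v. x \<in> T \<Longrightarrow> x * v \<in> T"
  shows "bi_invariant e f (sandw f e - T)"
  unfolding bi_invariant_def
proof (intro ballI conjI)
  fix m g assume m: "m \<in> sandw f e - T" and g: "g \<in> unitgrp f"
  obtain v where "v * (g * m) = m" using unitgrp_cancel_left(2)[OF assms(1,2) g] m by blast
  then have "g * m \<notin> T" using m assms(3)[of "g * m" v] by auto
  then show "g * m \<in> sandw f e - T" using unitgrp_cancel_left(1)[OF assms(1,2) g] m by blast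
next
  fix m g assume m: "m \<in> sandw f e - T" and g: "g \<in> unitgrp e"
  obtain v where "(m * g) * v = m" using unitgrp_cancel_right(2)[OF assms(1,2) g] m by blast
  then have "m * g \<notin> T" using m assms(4)[of "m * g" v] by auto
  then show "m * g \<in> sandw f e - T" using unitgrp_cancel_right(1)[OF assms(1,2) g] m by blast
qed

lemma regular_cancel_left:
  fixes g m v :: "'a::monoid_mult"
  assumes "v * (g * m) = m" "g * m = (g * m) * x * (g * m)"
  shows "m = m * (x * g) * m"
  by (metis assms mult.assoc)

lemma regular_cancel_right:
  fixes g m v :: "'a::monoid_mult"
  assumes "(m * g) * v = m" "m * g = (m * g) * x * (m * g)"
  shows "m = m * (g * x) * m"
  by (metis assms mult.assoc)

lemma bi_invariant_Null:
  fixes e f :: "'a::monoid_mult"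
  assumes "e * e = e" "f * f = f" "S \<subseteq> sandw f e" "bi_invariant e f S"
  shows "bi_invariant e f (Null S)"
  unfolding bi_invariant_def
proof (intro ballI conjI)
  fix m g assume m: "m \<in> Null S" and g: "g \<in> unitgrp f"
  then have "m \<in> sandw f e" "g * m \<in> S" using assms(3,4) unfolding Null_def bi_invariant_def by auto
  moreover obtain v where "v * (g * m) = m"
    using unitgrp_cancel_left[OF assms(1,2) g \<open>m \<in> sandw f e\<close>] by blast
  ultimately show "g * m \<in> Null S"
    using m regular_cancel_left unfolding Null_def by blast
next
  fix m g assume m: "m \<in> Null S" and g: "g \<in> unitgrp e"
  then have "m \<in> sandw f e" "m * g \<in> S" using assms(3,4) unfolding Null_def bi_invariant_def by auto
  moreover obtain v where "(m * g) * v = m"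
    using unitgrp_cancel_right[OF assms(1,2) g \<open>m \<in> sandw f e\<close>] by blast
  ultimately show "m * g \<in> Null S"
    using m regular_cancel_right unfolding Null_def by blast
qed

theorem mainTheorem17:
  fixes e f :: "'a::{monoid_mult, finite}"
  assumes "e \<in> idems" and "f \<in> idems"
  defines "X \<equiv> pideal e" and "Y \<equiv> pideal f"
  shows "AIrr e f = sandw f e - setprod (nabla Y) (nabla X)
    \<and> Irr e f = Null (AIrr e f)
    \<and> AIrr e f \<subseteq> sandw f e \<and> bi_invariant e f (AIrr e f)
    \<and> Irr e f \<subseteq> sandw f e \<and> bi_invariant e f (Irr e f)"
proof -
  have e: "e * e = e" and f: "f * f = f" using assms(1,2) unfolding idems_def by auto
  have AIrr: "AIrr e f = sandw f e - setprod (nabla Y) (nabla X)"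
    unfolding X_def Y_def by (rule AIrr_eq[OF e f])
  have Irr: "Irr e f = Null (AIrr e f)" by (rule Irr_eq_Null_AIrr[OF e f])
  have AIrr_inv: "bi_invariant e f (AIrr e f)"
    unfolding AIrr by (rule bi_invariant_diff_ideal[OF e f setprod_nabla_mult_left setprod_nabla_mult_right])
  have Irr_inv: "bi_invariant e f (Irr e f)"
    unfolding Irr by (rule bi_invariant_Null[OF e f AIrr_subset_sandw AIrr_inv])
  have "Irr e f \<subseteq> sandw f e" using AIrr_subset_sandw unfolding Irr Null_def by blast
  then show ?thesis using AIrr Irr AIrr_inv Irr_inv AIrr_subset_sandw by (intro conjI)
qed

end
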